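(* Let $c>0$, let $v\in\mathbb{R}^d$, and let $\xi$ be a random vector in $\mathbb{R}^d$ with density $\tilde p$ satisfying $\tilde p(\xi)=\tilde p(-\xi)$ for all $\xi$. Let $g=\mathrm{clip}(v+\xi,c)$. Then: 1. If $\|v\|\le\frac34 c$, then $\mathbb{E}_{\xi\sim\tilde p}[\langle v,g\rangle]\ge\|v\|^2\,\mathbb{P}_{\xi\sim\tilde p}\left(\|\xi\|<\frac c4\right)$. 2. If $\|v\|>\frac34 c$, then $\mathbb{E}_{\xi\sim\tilde p}[\langle v,g\rangle]\ge\frac34 c\,\|v\|\,\mathbb{P}_{\xi\sim\tilde p}\left(\|\xi\|<\frac c4\right)$.
   Context: For $g\in\mathbb{R}^d$ and $c>0$, $\mathrm{clip}(g,c)=g\cdot\min\left(1,\frac{c}{\|g\|}\right)$ (with $\mathrm{clip}(0,c)=0$); $\|\cdot\|$ is the Euclidean norm. In the paper $v$ is the true gradient $\nabla f(x_t)$ at the current iterate and $\xi$ the gradient noise. *)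

theory Defs
  imports "HOL-Analysis.Analysis"
begin

definition clip :: "'a::real_normed_vector \<Rightarrow> real \<Rightarrow> 'a" where
  "clip g c = (if g = 0 then 0 else min 1 (c / norm g) *\<^sub>R g)"

end

theory Submission
  imports Defs
begin

text \<open>Since the noise density is even, the expectation of \<open>\<langle>v, clip (v + \<xi>) c\<rangle>\<close> equals that
  of its even part \<open>(\<langle>v, clip (v + \<xi>) c\<rangle> + \<langle>v, clip (v - \<xi>) c\<rangle>) / 2\<close>. Writing \<open>a = v + \<xi>\<close>,
  \<open>b = v - \<xi>\<close>, so that \<open>2 v = a + b\<close>, this even part is nonnegative for every \<open>\<xi>\<close>.
  For \<open>norm \<xi> < c/4\<close> it is at least \<open>norm v\<^sup>2\<close> resp. \<open>3/4 * c * norm v\<close>: either both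
  \<open>v \<plusminus> \<xi>\<close> lie in the clipping ball, or they are shrunk by a factor at least
  \<open>c / (norm v + norm \<xi>)\<close> while \<open>\<langle>v, v + \<xi>\<rangle> + \<langle>v, v - \<xi>\<rangle> = 2 norm v\<^sup>2\<close>.\<close>

lemma clip_eq_scaleR: "clip g c = min 1 (c / norm g) *\<^sub>R g"
  by (simp add: clip_def)

lemma borel_measurable_clip [measurable]:
  "(\<lambda>g::'a::euclidean_space. clip g c) \<in> borel_measurable borel"
  unfolding clip_eq_scaleR by measurable

lemma norm_clip: "c \<ge> 0 \<Longrightarrow> norm (clip g c) = min (norm g) c"
  by (cases "g = 0") (auto simp: clip_eq_scaleR min_def field_simps)

lemma clip_eq_self: "norm g \<le> c \<Longrightarrow> clip g c = g"
  by (cases "g = 0") (auto simp: clip_eq_scaleR min_def field_simps)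

lemma inner_clip_self: "c \<ge> 0 \<Longrightarrow> inner g (clip g c) = norm g * norm (clip g c)"
  by (simp add: clip_eq_scaleR power2_norm_eq_inner[symmetric] power2_eq_square)

text \<open>Cauchy--Schwarz on the cross terms reduces this to the monotonicity of
  \<open>t \<mapsto> min t c\<close>.\<close>
lemma inner_add_clip_add_nonneg:
  assumes "c \<ge> 0"
  shows "0 \<le> inner (a + b) (clip a c + clip b c)"
proof -
  have "(norm a - norm b) * (min (norm a) c - min (norm b) c) \<ge> 0"
    by (cases "norm a \<le> norm b") (auto intro: mult_nonneg_nonneg mult_nonpos_nonpos)
  also have "\<dots> = inner a (clip a c) + inner b (clip b c) - norm b * norm (clip a c) - norm a * norm (clip b c)"
    using assms by (simp add: inner_clip_self norm_clip algebra_simps)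
  also have "\<dots> \<le> inner (a + b) (clip a c + clip b c)"
    using norm_cauchy_schwarz[of "-b" "clip a c"] norm_cauchy_schwarz[of "-a" "clip b c"]
    by (simp add: inner_add_left inner_add_right inner_commute)
  finally show ?thesis .
qed

lemma inner_clip_ge:
  assumes "c \<ge> 0" and "0 \<le> inner v w" and "norm w \<le> R"
  shows "min 1 (c / R) * inner v w \<le> inner v (clip w c)"
proof (cases "w = 0")
  case False
  then have "0 < norm w" by simp
  moreover from this have "0 < R" using assms(3) by linarith
  ultimately have "c / R \<le> c / norm w"
    using assms(1,3) by (intro divide_left_mono mult_pos_pos)
  then have "min 1 (c / R) \<le> min 1 (c / norm w)" by linarith
  then show ?thesis
    using assms(2) by (simp add: clip_eq_scaleR mult_right_mono)
qed (simp add: clip_def)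

lemma inner_clip_pair_nonneg:
  "c \<ge> 0 \<Longrightarrow> 0 \<le> inner v (clip (v + \<xi>) c) + inner v (clip (v - \<xi>) c)"
  using inner_add_clip_add_nonneg[of c "v + \<xi>" "v - \<xi>"]
  by (simp add: inner_add_right flip: scaleR_2)

lemma inner_clip_pair_eq:
  "norm v + norm \<xi> \<le> c \<Longrightarrow> inner v (clip (v + \<xi>) c) + inner v (clip (v - \<xi>) c) = 2 * (norm v)\<^sup>2"
  using norm_triangle_ineq[of v \<xi>] norm_triangle_ineq4[of v \<xi>]
  by (simp add: clip_eq_self inner_add_right inner_diff_right power2_norm_eq_inner)

lemma inner_clip_pair_ge:
  assumes "c \<ge> 0" and "norm \<xi> \<le> norm v"
  shows "min 1 (c / (norm v + norm \<xi>)) * (2 * (norm v)\<^sup>2)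
           \<le> inner v (clip (v + \<xi>) c) + inner v (clip (v - \<xi>) c)"
proof -
  have "\<bar>inner v \<xi>\<bar> \<le> norm v * norm v"
    using Cauchy_Schwarz_ineq2[of v \<xi>] assms(2) by (meson mult_left_mono norm_ge_zero order_trans)
  then have "0 \<le> inner v (v + \<xi>)" "0 \<le> inner v (v - \<xi>)"
    by (auto simp: inner_add_right inner_diff_right power2_norm_eq_inner[symmetric] power2_eq_square)
  moreover have "norm (v + \<xi>) \<le> norm v + norm \<xi>" "norm (v - \<xi>) \<le> norm v + norm \<xi>"
    by (rule norm_triangle_ineq norm_triangle_ineq4)+
  moreover have "inner v (v + \<xi>) + inner v (v - \<xi>) = 2 * (norm v)\<^sup>2"
    by (simp add: inner_add_right inner_diff_right power2_norm_eq_inner)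
  ultimately show ?thesis
    using inner_clip_ge[OF assms(1), of v "v + \<xi>"] inner_clip_ge[OF assms(1), of v "v - \<xi>"]
    by (metis add_mono distrib_left)
qed

text \<open>If \<open>norm v + norm \<xi> > c\<close>, the common factor is \<open>c / (norm v + norm \<xi>)\<close>, and
  \<open>norm \<xi> < c/4 < norm v / 3\<close> gives \<open>norm v \<ge> 3/4 * (norm v + norm \<xi>)\<close>.\<close>
lemma inner_clip_pair_large:
  assumes "c > 0" and "norm \<xi> < c / 4" and "3/4 * c < norm v"
  shows "2 * (3/4 * c * norm v) \<le> inner v (clip (v + \<xi>) c) + inner v (clip (v - \<xi>) c)"
proof (cases "norm v + norm \<xi> \<le> c")
  case True
  have "3/4 * c * norm v \<le> norm v * norm v"
    using assms(3) by (intro mult_right_mono) auto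
  then show ?thesis
    using inner_clip_pair_eq[OF True] by (simp add: power2_eq_square)
next
  case False
  let ?s = "norm v + norm \<xi>"
  have "norm v * (3 * norm \<xi>) \<le> norm v * norm v"
    using assms by (intro mult_left_mono) auto
  then have "3/4 * c * norm v * ?s \<le> c * (norm v)\<^sup>2"
    using assms(1) by (simp add: power2_eq_square algebra_simps mult_left_mono)
  then have "3/4 * c * norm v \<le> min 1 (c / ?s) * (norm v)\<^sup>2"
    using False assms(1) by (simp add: min_def field_simps)
  moreover have "min 1 (c / ?s) * (2 * (norm v)\<^sup>2) \<le> inner v (clip (v + \<xi>) c) + inner v (clip (v - \<xi>) c)"
    using assms by (intro inner_clip_pair_ge) auto
  ultimately show ?thesis by linarith
qed

lemma distr_uminus_density_lborel:
  fixes p :: "'a::euclidean_space \<Rightarrow> ennreal"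
  assumes [measurable]: "p \<in> borel_measurable borel" and sym: "\<And>x. p (- x) = p x"
  shows "distr (density lborel p) borel uminus = density lborel p"
proof -
  have lborel_reflect: "distr lborel borel uminus = (lborel :: 'a measure)"
    using lborel_affine[of "-1" "0::'a"] by (simp add: density_1)
  have "distr (density (distr lborel borel uminus) p) borel uminus
      = distr (density (distr lborel borel uminus) p) lborel uminus"
    by (intro distr_cong) auto
  also have "\<dots> = density lborel (p \<circ> uminus)"
    by (intro distr_density_distr) auto
  also have "p \<circ> uminus = p"
    using sym by (simp add: fun_eq_iff)
  finally show ?thesis
    by (simp only: lborel_reflect)
qed

lemma integral_ge_mult_measure_if_reflection_invariant:
  fixes f :: "'a::euclidean_space \<Rightarrow> real"
  assumes "finite_measure M" and sets_M: "sets M = sets borel"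
    and reflect: "distr M borel uminus = M"
    and f: "integrable M f" and S: "S \<in> sets M"
    and nonneg: "\<And>x. 0 \<le> f x + f (- x)"
    and bound: "\<And>x. x \<in> S \<Longrightarrow> 2 * B \<le> f x + f (- x)"
  shows "B * measure M S \<le> integral\<^sup>L M f"
proof -
  interpret finite_measure M by fact
  have [measurable]: "f \<in> borel_measurable borel"
    using borel_measurable_integrable[OF f] sets_M by (simp cong: measurable_cong_sets)
  have uminus_M [measurable]: "uminus \<in> measurable M borel"
    using sets_M by (simp cong: measurable_cong_sets)
  have f_reflect: "integrable M (\<lambda>x. f (- x))"
    by (rule integrable_distr[OF uminus_M]) (simp add: reflect f)
  have "integral\<^sup>L M (\<lambda>x. f (- x)) = integral\<^sup>L M f"
    by (subst (2) reflect[symmetric]) (simp add: integral_distr[OF uminus_M])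
  then have "integral\<^sup>L M f = integral\<^sup>L M (\<lambda>x. (f x + f (- x)) / 2)"
    using f f_reflect by simp
  moreover have "integral\<^sup>L M (\<lambda>x. B * indicator S x) \<le> integral\<^sup>L M (\<lambda>x. (f x + f (- x)) / 2)"
  proof (rule integral_mono)
    show "integrable M (\<lambda>x. B * indicator S x)"
      using S by (simp add: less_top[symmetric])
    show "integrable M (\<lambda>x. (f x + f (- x)) / 2)"
      using f f_reflect by simp
    show "B * indicator S x \<le> (f x + f (- x)) / 2" for x
      using nonneg[of x] bound[of x] by (auto split: split_indicator)
  qed
  ultimately show ?thesis
    using S by simp
qed

theorem theorem2:
  fixes c :: real and v :: "'a::euclidean_space" and p :: "'a \<Rightarrow> real"
  assumes c_pos: "c > 0"
    and p_meas: "p \<in> borel_measurable lborel"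
    and p_nonneg: "\<And>x. p x \<ge> 0"
    and p_int: "(\<integral>\<^sup>+ x. ennreal (p x) \<partial>lborel) = 1"
    and p_sym: "\<And>x. p x = p (- x)"
  shows "(norm v \<le> 3/4 * c \<longrightarrow>
           (\<integral>\<xi>. inner v (clip (v + \<xi>) c) \<partial>(density lborel (\<lambda>x. ennreal (p x))))
             \<ge> (norm v)\<^sup>2 * measure (density lborel (\<lambda>x. ennreal (p x))) {\<xi>. norm \<xi> < c / 4})
       \<and> (norm v > 3/4 * c \<longrightarrow>
           (\<integral>\<xi>. inner v (clip (v + \<xi>) c) \<partial>(density lborel (\<lambda>x. ennreal (p x))))
             \<ge> 3/4 * c * norm v * measure (density lborel (\<lambda>x. ennreal (p x))) {\<xi>. norm \<xi> < c / 4})"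
proof -
  let ?M = "density lborel (\<lambda>x. ennreal (p x))"
  let ?f = "\<lambda>\<xi>. inner v (clip (v + \<xi>) c)"
  let ?S = "{\<xi>::'a. norm \<xi> < c / 4}"
  have finite_M: "finite_measure ?M"
    using p_meas by (intro finite_measureI) (simp add: emeasure_density p_int)
  have reflect: "distr ?M borel uminus = ?M"
    using p_meas p_sym by (intro distr_uminus_density_lborel) auto
  have "\<bar>?f \<xi>\<bar> \<le> norm v * c" for \<xi>
  proof -
    have "\<bar>?f \<xi>\<bar> \<le> norm v * norm (clip (v + \<xi>) c)"
      by (rule Cauchy_Schwarz_ineq2)
    also have "\<dots> \<le> norm v * c"
      using c_pos by (simp add: norm_clip mult_left_mono)
    finally show ?thesis .
  qed
  then have "integrable ?M ?f"
    by (intro finite_measure.integrable_const_bound[OF finite_M, where B = "norm v * c"]) auto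
  then have integral_ge: "B * measure ?M ?S \<le> integral\<^sup>L ?M ?f"
    if "\<And>\<xi>. norm \<xi> < c / 4 \<Longrightarrow> 2 * B \<le> ?f \<xi> + ?f (- \<xi>)" for B
    using that c_pos inner_clip_pair_nonneg[of c v] finite_M reflect
    by (intro integral_ge_mult_measure_if_reflection_invariant) auto
  show ?thesis
  proof (intro conjI impI)
    assume "norm v \<le> 3/4 * c"
    then show "(norm v)\<^sup>2 * measure ?M ?S \<le> integral\<^sup>L ?M ?f"
      by (intro integral_ge) (simp add: inner_clip_pair_eq)
  next
    assume "3/4 * c < norm v"
    then show "3/4 * c * norm v * measure ?M ?S \<le> integral\<^sup>L ?M ?f"
      by (intro integral_ge) (metis inner_clip_pair_large[OF c_pos] diff_conv_add_uminus)
  qed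
qed

end
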